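(* Let $p>155$ be a prime, let $G$ be a cyclic group of order $p$, and let $S$ be an unsplittable minimal zero-sum sequence over $G$ of length $|S|=\frac{p-1}{2}$. Suppose $S=g^{r_1}(t_2g)^{r_2}(t_3g)^{r_3}(t_4g)^{r_4}$ with $g\in G$, nonnegative integers $r_1,\dots,r_4$, and integers $2\le t_2,t_3,t_4\le p-1$, where $r_2+r_3+r_4\le 15$. If $r_i\ge 2$ for some $i\in\{2,3,4\}$, then $t_i\ge\frac{p+3}{2}$.
   Context: A sequence over $G$ is a finite unordered list of elements of $G$ with repetition allowed, written multiplicatively; $h^r$ denotes $r$ copies of $h$ and $tg$ is the $t$-fold multiple of $g$. $|S|$ is the length, $\sigma(S)$ the sum of terms, and $\operatorname{supp}(S)$ the set of distinct elements occurring. $S$ is a minimal zero-sum sequence if $\sigma(S)=0$ and no subsequence $U$ with $1\le|U|<|S|$ has $\sigma(U)=0$. A minimal zero-sum sequence $S$ is unsplittable if there do not exist $h\in\operatorname{supp}(S)$ and $y,z\in G$ with $y+z=h$ such that the sequence obtained from $S$ by replacing one copy of $h$ with the two terms $y,z$ is again a minimal zero-sum sequence. *)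

theory Defs
  imports Main "HOL-Library.Multiset" "HOL-Library.Cardinality" "HOL-Computational_Algebra.Primes"
begin

fun nmul :: "nat \<Rightarrow> 'a::ab_group_add \<Rightarrow> 'a" where
  "nmul 0 g = 0"
| "nmul (Suc n) g = g + nmul n g"

definition cyclic_group :: "'a::ab_group_add itself \<Rightarrow> bool" where
  "cyclic_group _ \<longleftrightarrow> (\<exists>g::'a. \<forall>x::'a. \<exists>n. x = nmul n g)"

definition min_zero_sum :: "'a::ab_group_add multiset \<Rightarrow> bool" where
  "min_zero_sum S \<longleftrightarrow> sum_mset S = 0 \<and>
     (\<forall>U. U \<subseteq># S \<and> 1 \<le> size U \<and> size U < size S \<longrightarrow> sum_mset U \<noteq> 0)"

definition unsplittable :: "'a::ab_group_add multiset \<Rightarrow> bool" where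
  "unsplittable S \<longleftrightarrow> min_zero_sum S \<and>
     \<not> (\<exists>h y z. h \<in># S \<and> y + z = h \<and> min_zero_sum (S - {#h#} + {#y, z#}))"

end

theory Submission
  imports Defs
begin

text \<open>
  Write S as the image of a multiset T of multipliers under t \<mapsto> t g. Since g has order p,
  unsplittability of S means for T that no proper nonempty part has sum divisible by p, while
  splitting a multiplier t into 1 and t - 1 creates such a part; the latter says that every t
  in T lies in a proper part whose sum is \<equiv> 1 (mod p). With p = 2n + 1 and T = 1^r R, |R| = m \<le> 15,
  padding short sums of R with ones shows that every t in R exceeds r + 1 and is at most n + m,
  that a repeated t exceeds n, and that once n + 1 occurs in R all of R lies in [n + 1, n + m].
  For parts V of R write \<Sigma>V = |V| (n + 1) + e(V); a parity induction, again padding with ones,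
  bounds |V| + 2 e(V) < 4m, so a part with \<Sigma>V \<equiv> 1, i.e. |V| + 2 e(V) \<equiv> 2, must have e(V) = 0.
  Hence a repeated multiplier n + 1 would force R to be constant n + 1, and then p would divide
  \<Sigma>T = n (m + 1), which is impossible.
\<close>

lemma nmul_add: "nmul (a + b) x = nmul a x + nmul b x"
  by (induction a) (auto simp: add.assoc)

lemma nmul_0_right [simp]: "nmul k (0::'a::ab_group_add) = 0"
  by (induction k) auto

lemma nmul_mult: "nmul (a * b) x = nmul a (nmul b x)"
  by (induction a) (auto simp: nmul_add)

lemma sum_mset_image_nmul: "sum_mset (image_mset (\<lambda>t. nmul t g) T) = nmul (sum_mset T) g"
  by (induction T) (auto simp: nmul_add)

lemma nmul_card_eq_0: "nmul CARD('a::{ab_group_add,finite}) (y::'a) = 0"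
proof -
  have "(\<Sum>x\<in>UNIV. x + y) = (\<Sum>x\<in>(UNIV::'a set). x)"
    by (rule sum.reindex_bij_witness[of _ "\<lambda>x. x - y" "\<lambda>x. x + y"]) auto
  then have "(\<Sum>_\<in>(UNIV::'a set). y) = 0"
    by (simp add: sum.distrib)
  moreover have "(\<Sum>_\<in>A. y) = nmul (card A) y" if "finite A" for A :: "'a set"
    using that by (induction rule: finite_induct) auto
  ultimately show ?thesis by simp
qed

lemma nmul_eq_0_iff_dvd:
  assumes "prime p" "CARD('a::{ab_group_add,finite}) = p" "(g::'a) \<noteq> 0"
  shows "nmul a g = 0 \<longleftrightarrow> p dvd a"
proof
  assume "p dvd a"
  then obtain q where "a = p * q" ..
  then show "nmul a g = 0"
    using nmul_card_eq_0[of "nmul q g"] assms(2) by (simp add: nmul_mult)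
next
  assume a: "nmul a g = 0"
  show "p dvd a"
  proof (rule ccontr)
    assume ndvd: "\<not> p dvd a"
    then have "a \<noteq> 0"
      by (rule contrapos_nn) simp
    moreover have "coprime a p"
      using ndvd assms(1) by (metis coprime_commute prime_imp_coprime)
    ultimately obtain x y where xy: "a * x = p * y + 1"
      using bezout_nat[of a p] by auto
    have "nmul (a * x) g = 0"
      using a by (simp add: nmul_mult mult.commute[of a])
    moreover have "nmul (p * y + 1) g = g"
      using nmul_card_eq_0[of g] assms(2) by (simp add: nmul_add nmul_mult mult.commute[of p])
    ultimately show False
      using xy assms(3) by simp
  qed
qed

lemma subseteq_add_msetE:
  assumes "U \<subseteq># add_mset a M"
  obtains "U \<subseteq># M" | U' where "U = add_mset a U'" "U' \<subseteq># M"
proof (cases "a \<in># U")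
  case True
  then show ?thesis
    using assms that(2)[of "U - {#a#}"] by (simp add: subset_eq_diff_conv)
next
  case False
  then show ?thesis
    using assms that(1) by (metis diff_single_trivial subset_eq_diff_conv add_mset_add_single)
qed

lemma subseteq_plusE:
  assumes "U \<subseteq># A + B"
  obtains U1 U2 where "U = U1 + U2" "U1 \<subseteq># A" "U2 \<subseteq># B"
proof
  show "U = (U \<inter># A) + (U - U \<inter># A)"
    by (simp add: multiset_eq_iff min_def)
  show "U - U \<inter># A \<subseteq># B"
    using assms by (auto simp: subseteq_mset_def) (metis add.commute le_diff_conv)
qed simp

lemma subseteq_replicate_plusE:
  assumes "U \<subseteq># replicate_mset k a + R"
  obtains j W where "j \<le> k" "W \<subseteq># R" "U = replicate_mset j a + W"
  using assms by (elim subseteq_plusE msubseteq_replicate_msetE) blast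

lemma subseteq_image_msetE:
  assumes "U \<subseteq># image_mset f T"
  obtains V where "V \<subseteq># T" "U = image_mset f V"
proof -
  have "image_mset f T = U + (image_mset f T - U)"
    using assms by simp
  then show ?thesis
    using that by (metis image_mset_eq_plusD mset_subset_eq_add_left)
qed

definition min_zero_sum_mod :: "nat \<Rightarrow> nat multiset \<Rightarrow> bool" where
  "min_zero_sum_mod p T \<longleftrightarrow> p dvd sum_mset T \<and>
     (\<forall>U. U \<subseteq># T \<and> 1 \<le> size U \<and> size U < size T \<longrightarrow> \<not> p dvd sum_mset U)"

text \<open>Of the unsplittability condition only the splittings t g = g + (t - 1) g are kept;
  they are all the argument uses.\<close>

definition unsplittable_mod :: "nat \<Rightarrow> nat multiset \<Rightarrow> bool" where
  "unsplittable_mod p T \<longleftrightarrow> min_zero_sum_mod p T \<and>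
     (\<forall>t\<in>#T. 1 \<le> t \<longrightarrow> \<not> min_zero_sum_mod p (T - {#t#} + {#1, t - 1#}))"

lemma min_zero_sum_image_nmul_iff:
  assumes order: "\<And>a. nmul a g = 0 \<longleftrightarrow> p dvd a"
  shows "min_zero_sum (image_mset (\<lambda>t. nmul t g) T) \<longleftrightarrow> min_zero_sum_mod p T"
proof -
  have "(\<forall>U. U \<subseteq># image_mset (\<lambda>t. nmul t g) T \<and> 1 \<le> size U \<and> size U < size T
          \<longrightarrow> sum_mset U \<noteq> 0) \<longleftrightarrow>
        (\<forall>V. V \<subseteq># T \<and> 1 \<le> size V \<and> size V < size T \<longrightarrow> \<not> p dvd sum_mset V)"
    using order by (auto simp: sum_mset_image_nmul intro: image_mset_subseteq_mono
        elim!: subseteq_image_msetE)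
  then show ?thesis
    using order by (simp add: min_zero_sum_def min_zero_sum_mod_def sum_mset_image_nmul)
qed

lemma unsplittable_image_nmul:
  assumes order: "\<And>a. nmul a g = 0 \<longleftrightarrow> p dvd a"
    and "unsplittable (image_mset (\<lambda>t. nmul t g) T)"
  shows "unsplittable_mod p T"
  unfolding unsplittable_mod_def
proof (intro conjI ballI impI)
  let ?S = "image_mset (\<lambda>t. nmul t g) T"
  show "min_zero_sum_mod p T"
    using assms by (simp add: unsplittable_def min_zero_sum_image_nmul_iff)
  fix t assume t: "t \<in># T" "1 \<le> t"
  then have "g + nmul (t - 1) g = nmul t g"
    by (cases t) auto
  then have "\<not> min_zero_sum (?S - {#nmul t g#} + {#g, nmul (t - 1) g#})"
    using assms(2) t(1) image_eqI unfolding unsplittable_def by fastforce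
  moreover have "?S - {#nmul t g#} + {#g, nmul (t - 1) g#}
      = image_mset (\<lambda>t. nmul t g) (T - {#t#} + {#1, t - 1#})"
    using t(1) by (simp add: image_mset_Diff)
  ultimately show "\<not> min_zero_sum_mod p (T - {#t#} + {#1, t - 1#})"
    using min_zero_sum_image_nmul_iff[OF order] by metis
qed

lemma unsplittable_mod_split_witness:
  assumes uns: "unsplittable_mod p T" and t: "t \<in># T" "1 \<le> t"
  obtains W where "W \<subseteq># T - {#t#}" "p dvd 1 + sum_mset W"
proof -
  define X where "X = T - {#t#}"
  have T: "T = add_mset t X"
    using t(1) by (simp add: X_def)
  have min: "min_zero_sum_mod p T"
    and split: "\<not> min_zero_sum_mod p (add_mset 1 (add_mset (t - 1) X))"
    using uns t unfolding unsplittable_mod_def X_def by auto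
  have proper: "\<not> p dvd sum_mset U" if "U \<subseteq># T" "1 \<le> size U" "size U < size T" for U
    using min that unfolding min_zero_sum_mod_def by blast
  have "sum_mset (add_mset 1 (add_mset (t - 1) X)) = sum_mset T"
    using t(2) by (simp add: T)
  then obtain V where V: "V \<subseteq># add_mset 1 (add_mset (t - 1) X)" "1 \<le> size V"
      "size V \<le> size T" "p dvd sum_mset V"
    using min split by (auto simp: min_zero_sum_mod_def T)
  from V(1) show thesis
  proof (cases rule: subseteq_add_msetE)
    case 1
    then show thesis
    proof (cases rule: subseteq_add_msetE)
      case 1
      then have "V \<subseteq># T" "size V < size T"
        using size_mset_mono[OF 1] T
        by (metis add_mset_add_single mset_subset_eq_add_left subset_mset.order_trans, simp)
      then show thesis
        using proper V by blast
    next
      case (2 V')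
      have "X = V' + (X - V')"
        using 2(2) by simp
      then have "sum_mset T = (t - 1 + sum_mset V') + (1 + sum_mset (X - V'))"
        using t(2) by (simp add: T) (metis sum_mset.union)
      moreover have "p dvd sum_mset T"
        using min by (simp add: min_zero_sum_mod_def)
      moreover have "p dvd t - 1 + sum_mset V'"
        using V(4) 2(1) by simp
      ultimately have "p dvd 1 + sum_mset (X - V')"
        by (metis dvd_add_right_iff)
      then show thesis
        using that X_def by (metis diff_subset_eq_self)
    qed
  next
    case (2 V')
    then show thesis
    proof (cases rule: subseteq_add_msetE[OF 2(2)])
      case 1
      then show thesis
        using that[of V'] V(4) 2(1) by (simp add: X_def)
    next
      case (2 V'')
      \<comment> \<open>undoing the split gives a shorter zero-sum subsequence of T\<close>
      have "add_mset t V'' \<subseteq># T" "size (add_mset t V'') < size T"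
        using 2 \<open>V = add_mset 1 V'\<close> V(3) by (auto simp: T)
      moreover have "sum_mset (add_mset t V'') = sum_mset V"
        using 2 \<open>V = add_mset 1 V'\<close> t(2) by simp
      ultimately show thesis
        using proper V(4) by fastforce
    qed
  qed
qed

text \<open>R lists the multipliers other than 1 of a sequence of length n over a group of
  order 2n + 1.\<close>

locale mostly_ones =
  fixes n r :: nat and R :: "nat multiset"
  assumes n_ge_78: "78 \<le> n"
    and size_eq: "r + size R = n"
    and size_R_ge: "2 \<le> size R" and size_R_le: "size R \<le> 15"
    and R_range: "\<And>t. t \<in># R \<Longrightarrow> 2 \<le> t \<and> t \<le> 2 * n"
    and unsplittable: "unsplittable_mod (2 * n + 1) (replicate_mset r 1 + R)"
begin

abbreviation p :: nat where "p \<equiv> 2 * n + 1"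

lemma p_dvd_sum: "p dvd r + sum_mset R"
  using unsplittable by (simp add: unsplittable_mod_def min_zero_sum_mod_def)

lemma proper_subsum_not_dvd:
  assumes "j \<le> r" "W \<subseteq># R" "1 \<le> j + size W" "j + size W < n"
  shows "\<not> p dvd j + sum_mset W"
proof -
  have "replicate_mset j 1 + W \<subseteq># replicate_mset r 1 + R"
    using assms(1,2) by (simp add: mset_subset_eq_mono_add replicate_mset_msubseteq_iff)
  then show ?thesis
    using unsplittable assms(3,4) size_eq
    unfolding unsplittable_mod_def min_zero_sum_mod_def by auto
qed

lemma mult_le_n_plus_size:
  assumes "t \<in># R"
  shows "t \<le> n + size R"
proof (rule ccontr)
  assume "\<not> t \<le> n + size R"
  then have "\<not> p dvd (p - t) + sum_mset {#t#}"
    using assms R_range[OF assms] size_eq size_R_ge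
    by (intro proper_subsum_not_dvd) auto
  then show False
    using R_range[OF assms] by simp
qed

lemma split_witness:
  assumes "t \<in># R"
  obtains W where "W \<subseteq># R - {#t#}" "W \<noteq> {#}" "p dvd r + 1 + sum_mset W"
proof -
  have "t \<in># replicate_mset r 1 + R" "1 \<le> t"
    using assms R_range[OF assms] by auto
  moreover have "replicate_mset r 1 + R - {#t#} = replicate_mset r 1 + (R - {#t#})"
    using assms by simp
  ultimately obtain U where U: "U \<subseteq># replicate_mset r 1 + (R - {#t#})" "p dvd 1 + sum_mset U"
    by (metis unsplittable_mod_split_witness[OF unsplittable])
  from U(1) obtain j W where jW: "j \<le> r" "W \<subseteq># R - {#t#}" "U = replicate_mset j 1 + W"
    by (rule subseteq_replicate_plusE)
  have dvd: "p dvd (j + 1) + sum_mset W"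
    using U(2) jW(3) by (simp add: ac_simps)
  have W: "W \<subseteq># R"
    using jW(2) by (meson diff_subset_eq_self subset_mset.order_trans)
  have size_W: "size W < size R"
    using size_mset_mono[OF jW(2)] assms size_R_ge by (simp add: size_Diff_singleton)
  have "j = r"
  proof (rule ccontr)
    assume "j \<noteq> r"
    then have "\<not> p dvd (j + 1) + sum_mset W"
      using jW(1) W size_W size_eq by (intro proper_subsum_not_dvd) auto
    then show False
      using dvd by contradiction
  qed
  moreover have "W \<noteq> {#}"
  proof
    assume "W = {#}"
    then have "p dvd r + 1"
      using dvd \<open>j = r\<close> by simp
    then have "p \<le> r + 1"
      by (rule dvd_imp_le) simp
    then show False
      using size_eq size_R_ge by linarith
  qed
  ultimately show thesis
    using that jW(2) dvd by simp
qed

lemma split_complement: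
  assumes "t \<in># R"
  obtains V where "V \<subseteq># R" "t \<in># V" "size V < size R" "sum_mset V mod p = 1"
proof -
  obtain W where W: "W \<subseteq># R - {#t#}" "W \<noteq> {#}" "p dvd r + 1 + sum_mset W"
    using split_witness[OF assms] .
  have WR: "W \<subseteq># R"
    using W(1) by (meson diff_subset_eq_self subset_mset.order_trans)
  have "0 < count R t"
    using assms by simp
  then have "count W t < count R t"
    using mset_subset_eq_count[OF W(1), of t] by (simp del: count_greater_zero_iff)
  then have t_in: "t \<in># R - W"
    by (simp add: in_diff_count)
  have size_lt: "size (R - W) < size R"
    using WR W(2) size_mset_mono[OF WR] by (simp add: size_Diff_submset nonempty_has_size)
  have sum_R: "sum_mset R = sum_mset W + sum_mset (R - W)"
    using WR by (metis subset_mset.add_diff_inverse sum_mset.union)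
  have "sum_mset (R - W) mod p = ((r + 1 + sum_mset W) + sum_mset (R - W)) mod p"
    using W(3) by (metis add_0 dvd_imp_mod_0 mod_add_left_eq)
  also have "\<dots> = ((r + sum_mset R) + 1) mod p"
    using sum_R by (simp add: ac_simps)
  also have "\<dots> = 1 mod p"
    using p_dvd_sum by (metis add_0 dvd_imp_mod_0 mod_add_left_eq)
  finally show thesis
    using that[of "R - W"] t_in size_lt n_ge_78 by simp
qed

lemma ones_less_mult:
  assumes "t \<in># R"
  shows "r + 1 < t"
proof (rule ccontr)
  assume "\<not> r + 1 < t"
  obtain V where V: "V \<subseteq># R" "t \<in># V" "size V < size R" "sum_mset V mod p = 1"
    using split_complement[OF assms] .
  define V' where "V' = V - {#t#}"
  have V_eq: "V = add_mset t V'"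
    unfolding V'_def using V(2) by (rule insert_DiffM[symmetric])
  then have "(t + sum_mset V') mod p = 1 mod p"
    using V(4) n_ge_78 by simp
  then have "p dvd (t + sum_mset V') - 1"
    using R_range[OF assms] by (subst mod_eq_dvd_iff_nat[symmetric]) auto
  then have "p dvd (t - 1) + sum_mset V'"
    using R_range[OF assms] by (simp add: Suc_diff_le)
  moreover have "\<not> p dvd (t - 1) + sum_mset V'"
  proof (rule proper_subsum_not_dvd)
    show "V' \<subseteq># R"
      unfolding V'_def using V(1) by (meson diff_subset_eq_self subset_mset.order_trans)
    show "t - 1 + size V' < n"
      using V_eq V(3) size_eq \<open>\<not> r + 1 < t\<close> by simp
    show "t - 1 \<le> r" "1 \<le> t - 1 + size V'"
      using R_range[OF assms] \<open>\<not> r + 1 < t\<close> by auto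
  qed
  ultimately show False
    by contradiction
qed

lemma repeated_mult_gt_n:
  assumes "2 \<le> count R t"
  shows "n < t"
proof (rule ccontr)
  assume "\<not> n < t"
  have "0 < count R t"
    using assms by linarith
  then have "r + 1 < t"
    by (intro ones_less_mult) simp
  moreover have "{#t, t#} \<subseteq># R"
    using assms count_le_replicate_mset_subset_eq[of 2 R t] by (simp add: numeral_2_eq_2)
  ultimately have "\<not> p dvd (p - 2 * t) + sum_mset {#t, t#}"
    using \<open>\<not> n < t\<close> size_eq size_R_le n_ge_78 by (intro proper_subsum_not_dvd) auto
  then show False
    using \<open>\<not> n < t\<close> by simp
qed

lemma half_mult_least:
  assumes "n + 1 \<in># R" "s \<in># R"
  shows "n + 1 \<le> s"
proof (rule ccontr)
  assume "\<not> n + 1 \<le> s"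
  then have "{#n + 1, s#} \<subseteq># R"
    using assms by (simp add: insert_subset_eq_iff in_diff_count)
  moreover have "r + 1 < s"
    using assms(2) by (rule ones_less_mult)
  ultimately have "\<not> p dvd (n - s) + sum_mset {#n + 1, s#}"
    using \<open>\<not> n + 1 \<le> s\<close> size_eq size_R_le n_ge_78 by (intro proper_subsum_not_dvd) auto
  moreover have "(n - s) + sum_mset {#n + 1, s#} = p"
    using \<open>\<not> n + 1 \<le> s\<close> by simp
  ultimately show False
    by (metis dvd_refl)
qed

definition excess :: "nat multiset \<Rightarrow> nat" where
  "excess V = (\<Sum>v\<in>#V. v - (n + 1))"

lemma excess_empty [simp]: "excess {#} = 0"
  by (simp add: excess_def)

lemma excess_add_mset [simp]: "excess (add_mset x V) = (x - (n + 1)) + excess V"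
  by (simp add: excess_def)

lemma sum_mset_eq_excess:
  assumes "\<And>v. v \<in># V \<Longrightarrow> n + 1 \<le> v"
  shows "sum_mset V = size V * (n + 1) + excess V"
  using assms
proof (induction V)
  case (add x V)
  then have "n + 1 \<le> x" "sum_mset V = size V * (n + 1) + excess V"
    by simp_all
  then show ?case
    by simp
qed simp

lemma excess_bound:
  assumes above: "\<And>s. s \<in># R \<Longrightarrow> n + 1 \<le> s"
  shows "V \<subseteq># R \<Longrightarrow> size V < size R \<Longrightarrow>
    size V + 2 * excess V + 2 \<le> 4 * size R \<and>
    (odd (size V) \<longrightarrow> size V + 2 * excess V < 2 * size R)"
proof (induction V)
  case empty
  then show ?case
    using size_R_ge by simp
next
  case (add x V)
  have x: "x \<in># R" and V: "V \<subseteq># R" "size V < size R"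
    using add.prems mset_subset_eq_insertD[of x V R] by auto
  have x_bounds: "n + 1 \<le> x" "x \<le> n + size R"
    using above[OF x] mult_le_n_plus_size[OF x] by auto
  note IH = add.IH[OF V]
  show ?case
  proof (cases "odd (size V)")
    case True
    then show ?thesis
      using IH x_bounds by auto
  next
    case False
    then obtain q where q: "size V = 2 * q"
      by (auto elim: evenE)
    define e where "e = excess (add_mset x V)"
    have "q + e < size R"
    proof (rule ccontr)
      assume "\<not> q + e < size R"
      have "q + e \<le> n"
        using IH q x_bounds size_R_le n_ge_78 unfolding e_def by auto
      then obtain j where j: "n = j + (q + e)"
        by (metis add.commute le_Suc_ex)
      \<comment> \<open>adding j ones to the 2q + 1 terms of add_mset x V gives the sum (q + 1) p\<close>
      have "v \<in># add_mset x V \<Longrightarrow> n + 1 \<le> v" for v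
        using above add.prems(1) by (auto dest: mset_subset_eqD)
      then have "sum_mset (add_mset x V) = size (add_mset x V) * (n + 1) + e"
        unfolding e_def by (rule sum_mset_eq_excess)
      then have "sum_mset (add_mset x V) = (2 * q + 1) * (n + 1) + e"
        using q by simp
      then have "j + sum_mset (add_mset x V) = p * (q + 1)"
        unfolding j by (simp add: algebra_simps)
      moreover have "\<not> p dvd j + sum_mset (add_mset x V)"
        using add.prems q j \<open>\<not> q + e < size R\<close> size_eq by (intro proper_subsum_not_dvd) auto
      ultimately show False
        by (metis dvd_triv_left)
    qed
    then show ?thesis
      using q unfolding e_def by simp
  qed
qed

lemma eq_half_if_all_ge_half:
  assumes above: "\<And>s. s \<in># R \<Longrightarrow> n + 1 \<le> s" and s: "s \<in># R"
  shows "s = n + 1"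
proof (rule ccontr)
  assume "s \<noteq> n + 1"
  obtain V where V: "V \<subseteq># R" "s \<in># V" "size V < size R" "sum_mset V mod p = 1"
    using split_complement[OF s] .
  have above_V: "v \<in># V \<Longrightarrow> n + 1 \<le> v" for v
    using above V(1) by (auto dest: mset_subset_eqD)
  have "1 \<le> size V"
    using V(2) size_mset_mono[of "{#s#}" V] by simp
  have "excess V = (s - (n + 1)) + excess (V - {#s#})"
    using V(2) by (metis excess_add_mset insert_DiffM)
  then have "1 \<le> excess V"
    using above[OF s] \<open>s \<noteq> n + 1\<close> by linarith
  have "2 * sum_mset V = size V * p + (size V + 2 * excess V)"
    using sum_mset_eq_excess[OF above_V] by (simp add: algebra_simps)
  then have "(size V + 2 * excess V) mod p = (2 * sum_mset V) mod p"
    by (metis mod_mult_self3)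
  also have "\<dots> = (2 * (sum_mset V mod p)) mod p"
    by (simp add: mod_mult_right_eq)
  also have "\<dots> = 2"
    using V(4) n_ge_78 by simp
  finally have "(size V + 2 * excess V) mod p = 2" .
  moreover have "size V + 2 * excess V < p"
    using excess_bound[OF above V(1,3)] size_R_le n_ge_78 by linarith
  ultimately show False
    using \<open>1 \<le> size V\<close> \<open>1 \<le> excess V\<close> by simp
qed

lemma not_all_eq_half: "\<exists>s\<in>#R. s \<noteq> n + 1"
proof (rule ccontr)
  assume "\<not> ?thesis"
  then have "sum_mset R = size R * (n + 1)"
    using sum_mset_eq_excess[of R] by (simp add: excess_def)
  \<comment> \<open>then \<Sigma>T = n (|R| + 1), which p = 2n + 1 cannot divide\<close>
  then have "2 * (r + sum_mset R) + (size R + 1) = p * (size R + 1)"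
    using size_eq by (simp add: algebra_simps)
  then have "p dvd size R + 1"
    using p_dvd_sum by (metis dvd_add_right_iff dvd_mult dvd_triv_left)
  then show False
    using size_R_le n_ge_78 by (auto dest: dvd_imp_le)
qed

lemma repeated_mult_gt_half:
  assumes "2 \<le> count R t"
  shows "n + 1 < t"
proof (rule ccontr)
  assume "\<not> n + 1 < t"
  then have "t = n + 1"
    using repeated_mult_gt_n[OF assms] by simp
  moreover have "t \<in># R"
    using assms by (simp flip: count_greater_zero_iff)
  ultimately have "s \<in># R \<Longrightarrow> n + 1 \<le> s" for s
    using half_mult_least by blast
  then have "s \<in># R \<Longrightarrow> s = n + 1" for s
    using eq_half_if_all_ge_half by blast
  then show False
    using not_all_eq_half by blast
qed

end

theorem lemma3p2:
  fixes p :: nat and S :: "'a::{ab_group_add, finite} multiset"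
    and g :: 'a and r1 r2 r3 r4 t2 t3 t4 :: nat
  assumes "prime p" and "p > 155"
    and "CARD('a) = p" and "cyclic_group TYPE('a)"
    and "unsplittable S"
    and "size S = (p - 1) div 2"
    and "S = replicate_mset r1 g + replicate_mset r2 (nmul t2 g)
             + replicate_mset r3 (nmul t3 g) + replicate_mset r4 (nmul t4 g)"
    and "2 \<le> t2" "t2 \<le> p - 1" "2 \<le> t3" "t3 \<le> p - 1" "2 \<le> t4" "t4 \<le> p - 1"
    and "r2 + r3 + r4 \<le> 15"
  shows "(r2 \<ge> 2 \<longrightarrow> 2 * t2 \<ge> p + 3) \<and> (r3 \<ge> 2 \<longrightarrow> 2 * t3 \<ge> p + 3)
       \<and> (r4 \<ge> 2 \<longrightarrow> 2 * t4 \<ge> p + 3)"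
proof -
  define n where "n = (p - 1) div 2"
  have p: "p = 2 * n + 1"
    using prime_odd_nat[OF assms(1)] assms(2) unfolding n_def by presburger
  define R where "R = replicate_mset r2 t2 + replicate_mset r3 t3 + replicate_mset r4 t4"
  define T where "T = replicate_mset r1 1 + R"
  have S: "S = image_mset (\<lambda>t. nmul t g) T"
    using assms(7) by (simp add: T_def R_def)
  have size: "r1 + size R = n"
    using assms(6) by (simp add: S T_def n_def)
  have "{#g#} \<subseteq># S" "size {#g#} < size S"
    using size assms(2,14) p by (auto simp: S T_def R_def)
  then have "g \<noteq> 0"
    using assms(5) unfolding unsplittable_def min_zero_sum_def
    by (metis size_single order_refl sum_mset.singleton)
  then have order: "nmul a g = 0 \<longleftrightarrow> p dvd a" for a
    using nmul_eq_0_iff_dvd assms(1,3) by blast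
  have "mostly_ones n r1 R" if "2 \<le> size R"
  proof
    show "unsplittable_mod (2 * n + 1) (replicate_mset r1 1 + R)"
      using unsplittable_image_nmul[OF order] assms(5) by (simp add: S T_def p)
  qed (use that size p assms(2,8-14) in \<open>auto simp: R_def split: if_splits\<close>)
  then have "p + 3 \<le> 2 * t" if "2 \<le> count R t" for t
    using mostly_ones.repeated_mult_gt_half[of n r1 R t] that count_le_size[of R t] p by simp
  then show ?thesis
    by (auto simp: R_def)
qed

end
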